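(* Let $D=[0,1]$ or $D=S^1$, and assume the reproducing kernel Hilbert space $\mathcal{H}$ defining $\|\cdot\|_{\mathcal{V}}$ is continuously embedded into $C_0^1(\mathbb{R}^d\times S^{d-1})$. Let $(c_p)_{p\in\mathbb{N}}$ be a sequence of $C^1$ immersions $D\to\mathbb{R}^d$ converging to a $C^1$ immersion $c_\infty:D\to\mathbb{R}^d$ in the norm $\|c\|_{1,\infty}=\|c\|_\infty+\|\partial_\theta c\|_\infty$. Then $\|\mu_{c_p}-\mu_{c_\infty}\|_{\mathcal{V}}\to0$ as $p\to\infty$.
   Context: A $C^1$ immersion is a $C^1$ map $c$ with $\partial_\theta c(\theta)\neq0$ for all $\theta$. Let $\mathcal{K}$ be a positive definite kernel on $\mathbb{R}^d\times S^{d-1}$ with RKHS $\mathcal{H}$; $C_0^1(\mathbb{R}^d\times S^{d-1})$ is the space of $C^1$ functions vanishing at infinity together with their first derivatives, with norm $\|\omega\|_{1,\infty}=\|\omega\|_\infty+\|d\omega\|_\infty$. For a finite signed Radon measure $\mu$ on $\mathbb{R}^d\times S^{d-1}$, $\|\mu\|_{\mathcal{V}}=\sup_{\omega\in\mathcal{H},\|\omega\|_{\mathcal{H}}\le1}\int\omega\,d\mu$. For an immersion $c:D\to\mathbb{R}^d$, $\mu_c$ is the measure defined by $\int\omega\,d\mu_c=\int_D\omega\big(c(\theta),\partial_\theta c(\theta)/|\partial_\theta c(\theta)|\big)|\partial_\theta c(\theta)|\,d\theta$. *)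

theory Defs
  imports "HOL-Analysis.Analysis"
begin

definition Xset :: "('a::euclidean_space \<times> 'a) set" where
  "Xset = UNIV \<times> sphere 0 1"

text \<open>Open neighbourhood R^d x (R^d - {0}) and the canonical (0-homogeneous in v)
  extension of a function on R^d x S^(d-1) to it.  A function on R^d x S^(d-1) is C^1
  iff this extension is C^1, and at points of R^d x S^(d-1) the operator norm of the
  derivative of the extension equals the norm of the (tangential) differential.\<close>

definition Uset :: "('a::euclidean_space \<times> 'a) set" where
  "Uset = UNIV \<times> (UNIV - {0})"

definition ext_sph :: "('a::euclidean_space \<times> 'a \<Rightarrow> real) \<Rightarrow> 'a \<times> 'a \<Rightarrow> real" where
  "ext_sph \<omega> = (\<lambda>(x, v). \<omega> (x, v /\<^sub>R norm v))"

definition dnorm :: "('a::euclidean_space \<times> 'a \<Rightarrow> real) \<Rightarrow> 'a \<times> 'a \<Rightarrow> real" where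
  "dnorm \<omega> z = onorm (frechet_derivative (ext_sph \<omega>) (at z))"

definition C01 :: "('a::euclidean_space \<times> 'a \<Rightarrow> real) \<Rightarrow> bool" where
  "C01 \<omega> \<longleftrightarrow>
     (\<exists>D :: 'a \<times> 'a \<Rightarrow> ('a \<times> 'a) \<Rightarrow>\<^sub>L real.
        (\<forall>z\<in>Uset. (ext_sph \<omega> has_derivative blinfun_apply (D z)) (at z)) \<and> continuous_on Uset D)
   \<and> (\<forall>e>0. \<exists>R. \<forall>x v. norm v = 1 \<longrightarrow> norm x \<ge> R \<longrightarrow>
          \<bar>\<omega> (x, v)\<bar> < e \<and> dnorm \<omega> (x, v) < e)"

definition norm1inf :: "('a::euclidean_space \<times> 'a \<Rightarrow> real) \<Rightarrow> real" where
  "norm1inf \<omega> = (SUP z\<in>Xset. \<bar>\<omega> z\<bar>) + (SUP z\<in>Xset. dnorm \<omega> z)"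

definition pos_def_kernel :: "('b \<Rightarrow> 'b \<Rightarrow> real) \<Rightarrow> 'b set \<Rightarrow> bool" where
  "pos_def_kernel K X \<longleftrightarrow> (\<forall>x\<in>X. \<forall>y\<in>X. K x y = K y x) \<and>
     (\<forall>n (p :: nat \<Rightarrow> 'b) (a :: nat \<Rightarrow> real). (\<forall>i<n. p i \<in> X) \<longrightarrow>
        (\<Sum>i<n. \<Sum>j<n. a i * a j * K (p i) (p j)) \<ge> 0)"

text \<open>The RKHS H of K on X is represented by a real Hilbert space 'h together with the
  reproducing elements kx z = K(z,.) in H: an element f of H is the function
  (rk_eval kx f) z = <f, kx z>, K(y,z) = <kx y, kx z>, and distinct elements of 'h give
  distinct functions on X (i.e. 'h really is a space of functions on X).  By Moore-Aronszajn
  this determines H (with its norm) uniquely up to isometry.\<close>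

definition rk_eval :: "('b \<Rightarrow> 'h::real_inner) \<Rightarrow> 'h \<Rightarrow> 'b \<Rightarrow> real" where
  "rk_eval kx f = (\<lambda>z. inner f (kx z))"

definition is_rkhs :: "('b \<Rightarrow> 'b \<Rightarrow> real) \<Rightarrow> 'b set \<Rightarrow> ('b \<Rightarrow> 'h::{real_inner,complete_space}) \<Rightarrow> bool" where
  "is_rkhs K X kx \<longleftrightarrow> (\<forall>y\<in>X. \<forall>z\<in>X. K y z = inner (kx y) (kx z)) \<and>
     (\<forall>f. (\<forall>z\<in>X. rk_eval kx f z = 0) \<longrightarrow> f = 0)"

definition cont_embedded_C01 :: "('a::euclidean_space \<times> 'a \<Rightarrow> 'h::real_inner) \<Rightarrow> bool" where
  "cont_embedded_C01 kx \<longleftrightarrow> (\<forall>f. C01 (rk_eval kx f)) \<and>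
     (\<exists>C. \<forall>f. norm1inf (rk_eval kx f) \<le> C * norm f)"

text \<open>||mu||_V for a (signed) measure given through its integration functional.\<close>
definition Vnorm :: "('b \<Rightarrow> 'h::real_inner) \<Rightarrow> (('b \<Rightarrow> real) \<Rightarrow> real) \<Rightarrow> real" where
  "Vnorm kx \<mu> = (SUP f\<in>{f. norm f \<le> 1}. \<mu> (rk_eval kx f))"

text \<open>Parameter domain: per = False means D = [0,1]; per = True means D = S^1 = R/Z,
  curves being 1-periodic maps R -> R^d.\<close>

definition Dset :: "bool \<Rightarrow> real set" where
  "Dset per = (if per then UNIV else {0..1})"

definition cder :: "bool \<Rightarrow> (real \<Rightarrow> 'a::real_normed_vector) \<Rightarrow> real \<Rightarrow> 'a" where
  "cder per c t = vector_derivative c (at t within Dset per)"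

definition C1_immersion :: "bool \<Rightarrow> (real \<Rightarrow> 'a::euclidean_space) \<Rightarrow> bool" where
  "C1_immersion per c \<longleftrightarrow>
     (per \<longrightarrow> (\<forall>t. c (t + 1) = c t)) \<and>
     (\<forall>t\<in>Dset per. (c has_vector_derivative cder per c t) (at t within Dset per)) \<and>
     continuous_on (Dset per) (cder per c) \<and>
     (\<forall>t\<in>Dset per. cder per c t \<noteq> 0)"

definition dist1inf :: "bool \<Rightarrow> (real \<Rightarrow> 'a::euclidean_space) \<Rightarrow> (real \<Rightarrow> 'a) \<Rightarrow> real" where
  "dist1inf per c e = (SUP t\<in>{0..1}. norm (c t - e t)) + (SUP t\<in>{0..1}. norm (cder per c t - cder per e t))"

definition mu_curve :: "bool \<Rightarrow> (real \<Rightarrow> 'a::euclidean_space) \<Rightarrow> ('a \<times> 'a \<Rightarrow> real) \<Rightarrow> real" where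
  "mu_curve per c \<omega> = integral {0..1}
     (\<lambda>t. \<omega> (c t, cder per c t /\<^sub>R norm (cder per c t)) * norm (cder per c t))"

end

theory Submission
  imports Defs
begin

text \<open>For w in the unit ball of the RKHS, the embedding bounds w and its differential on
  R^d x S^(d-1) by one constant B; the mean value inequality for the 0-homogeneous extension of w
  then makes w 2B-Lipschitz between points whose directions are 1/2-close.  Since
  |a/|a| - b/|b|| <= 2 |a - b| / |b| and the speed of c_inf is bounded below by some m > 0, the
  integrands defining mu_(c_p)(w) and mu_(c_inf)(w) differ pointwise by O(||c_p - c_inf||_(1,inf)),
  uniformly in w, so the supremum over w tends to 0.\<close>

lemma ext_sph_unit [simp]: "norm v = 1 \<Longrightarrow> ext_sph \<omega> (x, v) = \<omega> (x, v)"
  unfolding ext_sph_def by simp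

lemma ext_sph_scale:
  assumes "r > 0"
  shows "ext_sph \<omega> (x, r *\<^sub>R v) = ext_sph \<omega> (x, v)"
  using assms unfolding ext_sph_def by (cases "v = 0") (simp_all add: field_simps)

lemma Xset_subset_Uset: "Xset \<subseteq> Uset"
  unfolding Xset_def Uset_def by auto

lemma C01_derivative:
  assumes "C01 \<omega>"
  obtains D where "\<And>z. z \<in> Uset \<Longrightarrow> (ext_sph \<omega> has_derivative blinfun_apply (D z)) (at z)"
    and "continuous_on Uset D" and "\<And>z. z \<in> Uset \<Longrightarrow> dnorm \<omega> z = norm (D z)"
proof -
  obtain D where D: "\<And>z. z \<in> Uset \<Longrightarrow> (ext_sph \<omega> has_derivative blinfun_apply (D z)) (at z)"
    and "continuous_on Uset D"
    using assms unfolding C01_def by blast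
  moreover have "dnorm \<omega> z = norm (D z)" if "z \<in> Uset" for z
    using D[OF that] unfolding dnorm_def by (metis frechet_derivative_at norm_blinfun.rep_eq)
  ultimately show ?thesis using that by blast
qed

lemma C01_continuous_on:
  assumes "C01 \<omega>"
  shows "continuous_on Xset \<omega>"
proof -
  obtain D where "\<And>z. z \<in> Uset \<Longrightarrow> (ext_sph \<omega> has_derivative blinfun_apply (D z)) (at z)"
    and "continuous_on Uset D" and "\<And>z. z \<in> Uset \<Longrightarrow> dnorm \<omega> z = norm (D z)"
    using C01_derivative[OF assms] by blast
  then have "continuous_on Uset (ext_sph \<omega>)"
    by (intro continuous_at_imp_continuous_on ballI has_derivative_continuous)
  then have "continuous_on Xset (ext_sph \<omega>)"
    using Xset_subset_Uset by (rule continuous_on_subset)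
  then show ?thesis
    by (rule continuous_on_eq) (auto simp: Xset_def)
qed

lemma C01_dnorm_continuous_on:
  assumes "C01 \<omega>"
  shows "continuous_on Xset (dnorm \<omega>)"
proof -
  obtain D where "\<And>z. z \<in> Uset \<Longrightarrow> (ext_sph \<omega> has_derivative blinfun_apply (D z)) (at z)"
    and D_cont: "continuous_on Uset D" and dnorm_D: "\<And>z. z \<in> Uset \<Longrightarrow> dnorm \<omega> z = norm (D z)"
    using C01_derivative[OF assms] by blast
  from D_cont have "continuous_on Xset (\<lambda>z. norm (D z))"
    using Xset_subset_Uset by (intro continuous_on_norm) (rule continuous_on_subset)
  then show ?thesis
    by (rule continuous_on_eq) (use dnorm_D Xset_subset_Uset in auto)
qed

lemma C01_dnorm_nonneg:
  assumes "C01 \<omega>" and "z \<in> Xset"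
  shows "0 \<le> dnorm \<omega> z"
proof -
  obtain D where "\<And>z. z \<in> Uset \<Longrightarrow> (ext_sph \<omega> has_derivative blinfun_apply (D z)) (at z)"
    and "continuous_on Uset D" and dnorm_D: "\<And>z. z \<in> Uset \<Longrightarrow> dnorm \<omega> z = norm (D z)"
    using C01_derivative[OF assms(1)] by blast
  show ?thesis
    using dnorm_D[of z] assms(2) Xset_subset_Uset by auto
qed

lemma bdd_above_image_Xset:
  fixes g :: "'a::euclidean_space \<times> 'a \<Rightarrow> real"
  assumes "continuous_on Xset g"
    and "\<forall>e>0. \<exists>R. \<forall>x v. norm v = 1 \<longrightarrow> norm x \<ge> R \<longrightarrow> g (x, v) < e"
  shows "bdd_above (g ` Xset)"
proof -
  obtain R where R: "\<And>x v. norm v = 1 \<Longrightarrow> norm x \<ge> R \<Longrightarrow> g (x, v) < 1"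
    using assms(2) zero_less_one by blast
  define K :: "('a \<times> 'a) set" where "K = cball 0 R \<times> sphere 0 1"
  have "compact K" and "K \<subseteq> Xset"
    unfolding K_def Xset_def by (auto intro: compact_Times)
  then have "bdd_above (g ` K)"
    using assms(1) by (meson bounded_imp_bdd_above compact_continuous_image compact_imp_bounded
        continuous_on_subset)
  then obtain B where B: "\<And>z. z \<in> K \<Longrightarrow> g z \<le> B"
    by (auto simp: bdd_above_def)
  have "g (x, v) \<le> max B 1" if "(x, v) \<in> Xset" for x v
    using that R[of v x] B[of "(x, v)"] unfolding K_def Xset_def by force
  then show ?thesis
    by (intro bdd_aboveI2) auto
qed

lemma C01_le_norm1inf:
  assumes "C01 \<omega>" and "z \<in> Xset"
  shows C01_abs_le_norm1inf: "\<bar>\<omega> z\<bar> \<le> norm1inf \<omega>"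
    and C01_dnorm_le_norm1inf: "dnorm \<omega> z \<le> norm1inf \<omega>"
proof -
  have vanish: "\<forall>e>0. \<exists>R. \<forall>x v. norm v = 1 \<longrightarrow> norm x \<ge> R \<longrightarrow> \<bar>\<omega> (x, v)\<bar> < e \<and> dnorm \<omega> (x, v) < e"
    using assms(1) unfolding C01_def by blast
  have "continuous_on Xset (\<lambda>z. \<bar>\<omega> z\<bar>)"
    using C01_continuous_on[OF assms(1)] by (rule continuous_on_rabs)
  then have "bdd_above ((\<lambda>z. \<bar>\<omega> z\<bar>) ` Xset)"
    by (rule bdd_above_image_Xset) (use vanish in meson)
  then have sup1: "\<bar>\<omega> z\<bar> \<le> (SUP z\<in>Xset. \<bar>\<omega> z\<bar>)"
    by (rule cSUP_upper[OF assms(2)])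
  have "bdd_above (dnorm \<omega> ` Xset)"
    using C01_dnorm_continuous_on[OF assms(1)] by (rule bdd_above_image_Xset) (use vanish in meson)
  then have sup2: "dnorm \<omega> z \<le> (SUP z\<in>Xset. dnorm \<omega> z)"
    by (rule cSUP_upper[OF assms(2)])
  show "\<bar>\<omega> z\<bar> \<le> norm1inf \<omega>" and "dnorm \<omega> z \<le> norm1inf \<omega>"
    using sup1 sup2 C01_dnorm_nonneg[OF assms] abs_ge_zero[of "\<omega> z"]
    unfolding norm1inf_def by linarith+
qed

lemma onorm_scaleR_snd_le:
  fixes r C :: real
  assumes "1 \<le> C" and "\<bar>r\<bar> \<le> C"
  shows "onorm (\<lambda>p::'a::real_normed_vector \<times> 'b::real_normed_vector. (fst p, r *\<^sub>R snd p)) \<le> C"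
proof (rule onorm_bound)
  show "0 \<le> C"
    using assms(1) by simp
  fix p :: "'a \<times> 'b"
  have "1 \<le> C\<^sup>2" and "r\<^sup>2 \<le> C\<^sup>2"
    using assms abs_le_square_iff[of r C] by auto
  then have "(norm (fst p))\<^sup>2 + r\<^sup>2 * (norm (snd p))\<^sup>2 \<le> C\<^sup>2 * (norm (fst p))\<^sup>2 + C\<^sup>2 * (norm (snd p))\<^sup>2"
    by (intro add_mono mult_right_mono) (simp_all add: mult_le_cancel_right1)
  then have "(norm (fst p))\<^sup>2 + (norm (r *\<^sub>R snd p))\<^sup>2 \<le> C\<^sup>2 * ((norm (fst p))\<^sup>2 + (norm (snd p))\<^sup>2)"
    by (simp add: power_mult_distrib distrib_left)
  then have "sqrt ((norm (fst p))\<^sup>2 + (norm (r *\<^sub>R snd p))\<^sup>2)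
      \<le> sqrt (C\<^sup>2) * sqrt ((norm (fst p))\<^sup>2 + (norm (snd p))\<^sup>2)"
    by (metis real_sqrt_le_mono real_sqrt_mult)
  then show "norm (fst p, r *\<^sub>R snd p) \<le> C * norm p"
    using \<open>0 \<le> C\<close> by (cases p) (simp add: norm_Pair)
qed

text \<open>The extension \<^term>\<open>ext_sph \<omega>\<close> is invariant under \<open>v \<mapsto> v /\<^sub>R norm v\<close>, so its
  derivative at \<open>(x, v)\<close> is the derivative at \<open>(x, v /\<^sub>R norm v) \<in> Xset\<close> composed with this
  rescaling, which has norm at most 2 on the convex set \<open>UNIV \<times> cball u' (1/2)\<close>; the mean value
  inequality on that set gives the Lipschitz bound.\<close>

lemma C01_lipschitz_near_sphere:
  fixes \<omega> :: "'a::euclidean_space \<times> 'a \<Rightarrow> real"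
  assumes "C01 \<omega>" and M: "\<And>z. z \<in> Xset \<Longrightarrow> dnorm \<omega> z \<le> M"
    and u: "norm u = 1" and u': "norm u' = 1" and uu': "norm (u - u') \<le> 1/2"
  shows "\<bar>\<omega> (x, u) - \<omega> (x', u')\<bar> \<le> 2 * M * (norm (x - x') + norm (u - u'))"
proof -
  obtain D where D: "\<And>z. z \<in> Uset \<Longrightarrow> (ext_sph \<omega> has_derivative blinfun_apply (D z)) (at z)"
    and "continuous_on Uset D" and dnorm_D: "\<And>z. z \<in> Uset \<Longrightarrow> dnorm \<omega> z = norm (D z)"
    using C01_derivative[OF assms(1)] by blast
  have "(x, u) \<in> Xset"
    using u unfolding Xset_def by simp
  then have "0 \<le> M"
    using C01_dnorm_nonneg[OF assms(1)] M by (meson order_trans)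
  define S :: "('a \<times> 'a) set" where "S = UNIV \<times> cball u' (1/2)"
  define L where "L z p = (fst p, (1 / norm (snd z)) *\<^sub>R snd p)" for z p :: "'a \<times> 'a"
  have norm_snd: "1/2 \<le> norm (snd z)" if "z \<in> S" for z
    using that u' norm_triangle_ineq2[of u' "snd z"]
    unfolding S_def by (auto simp: dist_norm)
  have L_linear: "bounded_linear (L z)" for z
    unfolding L_def by (intro bounded_linear_Pair bounded_linear_fst bounded_linear_scaleR_right
        bounded_linear_compose[OF bounded_linear_scaleR_right bounded_linear_snd])
  have L_Xset: "L z z \<in> Xset" if "z \<in> S" for z
    using norm_snd[OF that] unfolding L_def Xset_def by auto
  have deriv: "(ext_sph \<omega> has_derivative (blinfun_apply (D (L z z)) \<circ> L z)) (at z within S)"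
    if "z \<in> S" for z
  proof -
    have "0 < 1 / norm (snd z)"
      using norm_snd[OF that] by (intro divide_pos_pos) linarith+
    then have "ext_sph \<omega> \<circ> L z = ext_sph \<omega>"
      by (simp add: L_def ext_sph_scale fun_eq_iff)
    moreover have "(ext_sph \<omega> \<circ> L z has_derivative (blinfun_apply (D (L z z)) \<circ> L z)) (at z)"
      using L_linear bounded_linear_imp_has_derivative D L_Xset[OF that] Xset_subset_Uset
      by (blast intro: diff_chain_at)
    ultimately show ?thesis
      by (metis has_derivative_at_withinI)
  qed
  have onorm_deriv: "onorm (blinfun_apply (D (L z z)) \<circ> L z) \<le> M * 2" if "z \<in> S" for z
  proof -
    have "onorm (blinfun_apply (D (L z z)) \<circ> L z) \<le> onorm (blinfun_apply (D (L z z))) * onorm (L z)"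
      using onorm_compose L_linear blinfun.bounded_linear_right by blast
    also have "\<dots> \<le> M * 2"
    proof (rule mult_mono)
      show "onorm (blinfun_apply (D (L z z))) \<le> M"
        using dnorm_D M L_Xset[OF that] Xset_subset_Uset by (metis norm_blinfun.rep_eq subsetD)
      show "onorm (L z) \<le> 2"
        unfolding L_def using norm_snd[OF that] by (intro onorm_scaleR_snd_le) (auto simp: divide_le_eq)
    qed (use \<open>0 \<le> M\<close> in \<open>auto intro: onorm_pos_le L_linear blinfun.bounded_linear_right\<close>)
    finally show ?thesis .
  qed
  have "(x, u) \<in> S" and "(x', u') \<in> S" and "convex S"
    using uu' unfolding S_def by (auto simp: dist_norm norm_minus_commute intro: convex_Times)
  then have "norm (ext_sph \<omega> (x, u) - ext_sph \<omega> (x', u')) \<le> M * 2 * norm ((x, u) - (x', u'))"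
    using differentiable_bound[OF _ deriv onorm_deriv] by blast
  also have "\<dots> \<le> M * 2 * (norm (x - x') + norm (u - u'))"
    using \<open>0 \<le> M\<close> norm_Pair_le[of "x - x'" "u - u'"] by (intro mult_left_mono) auto
  finally show ?thesis
    using u u' by (simp add: mult.commute mult.left_commute)
qed

lemma norm_unit_diff_le:
  fixes a b :: "'a::real_normed_vector"
  assumes "b \<noteq> 0"
  shows "norm (a /\<^sub>R norm a - b /\<^sub>R norm b) \<le> 2 * norm (a - b) / norm b"
proof (cases "a = 0")
  case True
  then show ?thesis using assms by simp
next
  case False
  have "norm (a /\<^sub>R norm a - a /\<^sub>R norm b) = \<bar>1 / norm a - 1 / norm b\<bar> * norm a"
    by (simp flip: scaleR_diff_left add: divide_inverse_commute)
  also have "\<dots> = \<bar>norm b - norm a\<bar> / norm b"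
    using assms False by (simp add: field_simps abs_div)
  also have "\<dots> \<le> norm (a - b) / norm b"
    by (intro divide_right_mono) (auto simp: norm_triangle_ineq3 abs_minus_commute)
  finally have "norm (a /\<^sub>R norm a - a /\<^sub>R norm b) \<le> norm (a - b) / norm b" .
  moreover have "norm (a /\<^sub>R norm b - b /\<^sub>R norm b) = norm (a - b) / norm b"
    by (simp flip: scaleR_diff_right add: divide_inverse_commute)
  ultimately show ?thesis
    using norm_triangle_ineq[of "a /\<^sub>R norm a - a /\<^sub>R norm b" "a /\<^sub>R norm b - b /\<^sub>R norm b"]
    by simp
qed

lemma C01_direction_diff_le:
  fixes \<omega> :: "'a::euclidean_space \<times> 'a \<Rightarrow> real"
  assumes "C01 \<omega>" and M: "\<And>z. z \<in> Xset \<Longrightarrow> dnorm \<omega> z \<le> M"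
    and "0 < m" and m: "m \<le> norm v"
    and x: "norm (x' - x) \<le> \<delta>" and v: "norm (v' - v) \<le> \<delta>" and "4 * \<delta> \<le> m"
  shows "\<bar>\<omega> (x', v' /\<^sub>R norm v') - \<omega> (x, v /\<^sub>R norm v)\<bar> \<le> 2 * M * (\<delta> + 2 * \<delta> / m)"
proof -
  have "0 \<le> \<delta>"
    using x norm_ge_zero order_trans by blast
  have "v \<noteq> 0" and "v' \<noteq> 0"
    using \<open>0 < m\<close> m v \<open>4 * \<delta> \<le> m\<close> norm_triangle_ineq2[of v' v] by auto
  then have unit: "norm (v /\<^sub>R norm v) = 1" "norm (v' /\<^sub>R norm v') = 1"
    by auto
  then have "(x, v /\<^sub>R norm v) \<in> Xset"
    unfolding Xset_def by simp
  then have "0 \<le> M"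
    using C01_dnorm_nonneg[OF assms(1)] M by (meson order_trans)
  have "norm (v' /\<^sub>R norm v' - v /\<^sub>R norm v) \<le> 2 * norm (v' - v) / norm v"
    using \<open>v \<noteq> 0\<close> by (rule norm_unit_diff_le)
  also have "\<dots> \<le> 2 * \<delta> / m"
    using v m \<open>0 < m\<close> \<open>0 \<le> \<delta>\<close> by (intro frac_le) auto
  finally have close: "norm (v' /\<^sub>R norm v' - v /\<^sub>R norm v) \<le> 2 * \<delta> / m" .
  moreover have "2 * \<delta> / m \<le> 1/2"
    using \<open>0 < m\<close> \<open>4 * \<delta> \<le> m\<close> by (simp add: field_simps)
  ultimately have "\<bar>\<omega> (x', v' /\<^sub>R norm v') - \<omega> (x, v /\<^sub>R norm v)\<bar>
      \<le> 2 * M * (norm (x' - x) + norm (v' /\<^sub>R norm v' - v /\<^sub>R norm v))"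
    using C01_lipschitz_near_sphere[OF assms(1) M unit(2,1)] by simp
  also have "\<dots> \<le> 2 * M * (\<delta> + 2 * \<delta> / m)"
    using x close \<open>0 \<le> M\<close> by (intro mult_left_mono add_mono) auto
  finally show ?thesis .
qed

lemma C01_integrand_diff_le:
  fixes \<omega> :: "'a::euclidean_space \<times> 'a \<Rightarrow> real"
  assumes "C01 \<omega>" and B: "norm1inf \<omega> \<le> B"
    and "0 < m" and m: "m \<le> norm v" and W: "norm v \<le> W"
    and x: "norm (x' - x) \<le> \<delta>" and v: "norm (v' - v) \<le> \<delta>" and "4 * \<delta> \<le> m"
  shows "\<bar>\<omega> (x', v' /\<^sub>R norm v') * norm v' - \<omega> (x, v /\<^sub>R norm v) * norm v\<bar>
    \<le> 2 * B * (\<delta> + 2 * \<delta> / m) * (W + \<delta>) + B * \<delta>"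
proof -
  define u' where "u' = v' /\<^sub>R norm v'"
  define u where "u = v /\<^sub>R norm v"
  have "v \<noteq> 0"
    using \<open>0 < m\<close> m by auto
  then have "(x, u) \<in> Xset"
    unfolding u_def Xset_def by simp
  then have bound: "\<bar>\<omega> (x, u)\<bar> \<le> B"
    using C01_abs_le_norm1inf[OF \<open>C01 \<omega>\<close>] B by (meson order_trans)
  then have "0 \<le> B"
    by (meson abs_ge_zero order_trans)
  have "\<And>z. z \<in> Xset \<Longrightarrow> dnorm \<omega> z \<le> B"
    using C01_dnorm_le_norm1inf[OF \<open>C01 \<omega>\<close>] B by (meson order_trans)
  then have lip: "\<bar>\<omega> (x', u') - \<omega> (x, u)\<bar> \<le> 2 * B * (\<delta> + 2 * \<delta> / m)"
    unfolding u_def u'_def using C01_direction_diff_le assms(1,3-8) by blast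
  have "\<bar>norm v' - norm v\<bar> \<le> \<delta>"
    using v norm_triangle_ineq3[of v' v] by linarith
  with bound \<open>0 \<le> B\<close> have "\<bar>\<omega> (x, u)\<bar> * \<bar>norm v' - norm v\<bar> \<le> B * \<delta>"
    by (intro mult_mono) auto
  moreover have "\<bar>\<omega> (x', u') - \<omega> (x, u)\<bar> * norm v' \<le> 2 * B * (\<delta> + 2 * \<delta> / m) * (W + \<delta>)"
    using lip W v norm_triangle_ineq2[of v' v]
    by (intro mult_mono) (auto intro: order_trans[OF abs_ge_zero lip])
  moreover have "\<omega> (x', u') * norm v' - \<omega> (x, u) * norm v
      = (\<omega> (x', u') - \<omega> (x, u)) * norm v' + \<omega> (x, u) * (norm v' - norm v)"
    by (simp add: algebra_simps)
  ultimately have "\<bar>\<omega> (x', u') * norm v' - \<omega> (x, u) * norm v\<bar>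
      \<le> 2 * B * (\<delta> + 2 * \<delta> / m) * (W + \<delta>) + B * \<delta>"
    using abs_triangle_ineq[of "(\<omega> (x', u') - \<omega> (x, u)) * norm v'" "\<omega> (x, u) * (norm v' - norm v)"]
    by (simp add: abs_mult)
  then show ?thesis
    unfolding u_def u'_def .
qed

lemma C1_immersion_on_unit_interval:
  assumes "C1_immersion per c"
  shows C1_immersion_continuous_on: "continuous_on {0..1} c"
    and C1_immersion_cder_continuous_on: "continuous_on {0..1} (cder per c)"
    and C1_immersion_cder_nonzero: "t \<in> {0..1} \<Longrightarrow> cder per c t \<noteq> 0"
proof -
  have sub: "{0..1} \<subseteq> Dset per"
    unfolding Dset_def by auto
  have "continuous_on (Dset per) c"
    using assms unfolding C1_immersion_def
    by (meson continuous_on_eq_continuous_within has_vector_derivative_continuous)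
  then show "continuous_on {0..1} c"
    using sub continuous_on_subset by blast
  show "continuous_on {0..1} (cder per c)" and "t \<in> {0..1} \<Longrightarrow> cder per c t \<noteq> 0"
    using assms sub continuous_on_subset unfolding C1_immersion_def by blast+
qed

lemma C1_immersion_speed_bounds:
  assumes "C1_immersion per c"
  obtains m W where "0 < m" and "\<And>t. t \<in> {0..1} \<Longrightarrow> m \<le> norm (cder per c t)"
    and "\<And>t. t \<in> {0..1} \<Longrightarrow> norm (cder per c t) \<le> W"
proof -
  have cont: "continuous_on {0..1} (\<lambda>t. norm (cder per c t))"
    using C1_immersion_cder_continuous_on[OF assms] by (intro continuous_intros)
  have "{0..1::real} \<noteq> {}"
    by simp
  then obtain t0 t1 where "t0 \<in> {0..1}"
    and "\<forall>t\<in>{0..1}. norm (cder per c t0) \<le> norm (cder per c t)"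
    and "\<forall>t\<in>{0..1}. norm (cder per c t) \<le> norm (cder per c t1)"
    using continuous_attains_inf[OF compact_Icc _ cont] continuous_attains_sup[OF compact_Icc _ cont]
    by blast
  moreover have "0 < norm (cder per c t0)"
    using C1_immersion_cder_nonzero[OF assms \<open>t0 \<in> {0..1}\<close>] by simp
  ultimately show ?thesis
    using that by blast
qed

lemma bdd_above_norm_continuous_on_Icc:
  fixes f :: "real \<Rightarrow> 'a::real_normed_vector"
  assumes "continuous_on {a..b} f"
  shows "bdd_above ((\<lambda>t. norm (f t)) ` {a..b})"
proof -
  have "bounded (f ` {a..b})"
    by (intro compact_imp_bounded compact_continuous_image assms compact_Icc)
  then have "bdd_above (norm ` f ` {a..b})"
    by (simp add: bdd_above_norm)
  then show ?thesis
    by (simp add: image_image)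
qed

lemma dist1inf_ge:
  assumes "C1_immersion per c" and "C1_immersion per e" and "t \<in> {0..1}"
  shows "norm (c t - e t) \<le> dist1inf per c e"
    and "norm (cder per c t - cder per e t) \<le> dist1inf per c e"
proof -
  note C1_immersion_on_unit_interval[OF assms(1)] C1_immersion_on_unit_interval[OF assms(2)]
  then have "norm (c t - e t) \<le> (SUP t\<in>{0..1}. norm (c t - e t))"
    and "norm (cder per c t - cder per e t) \<le> (SUP t\<in>{0..1}. norm (cder per c t - cder per e t))"
    by (intro cSUP_upper[OF assms(3)] bdd_above_norm_continuous_on_Icc continuous_intros; simp)+
  then show "norm (c t - e t) \<le> dist1inf per c e"
    and "norm (cder per c t - cder per e t) \<le> dist1inf per c e"
    unfolding dist1inf_def using norm_ge_zero[of "c t - e t"]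
      norm_ge_zero[of "cder per c t - cder per e t"] by linarith+
qed

lemma continuous_on_mu_curve_integrand:
  fixes \<omega> :: "'a::euclidean_space \<times> 'a \<Rightarrow> real"
  assumes "C01 \<omega>" and "C1_immersion per c"
  shows "continuous_on {0..1} (\<lambda>t. \<omega> (c t, cder per c t /\<^sub>R norm (cder per c t)) * norm (cder per c t))"
proof -
  note c = C1_immersion_on_unit_interval[OF assms(2)]
  have "continuous_on {0..1} (\<lambda>t. (c t, cder per c t /\<^sub>R norm (cder per c t)))"
    using c by (intro continuous_intros) auto
  moreover have "(\<lambda>t. (c t, cder per c t /\<^sub>R norm (cder per c t))) ` {0..1} \<subseteq> Xset"
    using c(3) unfolding Xset_def by auto
  ultimately have "continuous_on {0..1} (\<lambda>t. \<omega> (c t, cder per c t /\<^sub>R norm (cder per c t)))"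
    using continuous_on_compose2[OF C01_continuous_on[OF assms(1)]] by blast
  then show ?thesis
    using c(2) by (intro continuous_intros)
qed

lemma mu_curve_diff_le:
  fixes \<omega> :: "'a::euclidean_space \<times> 'a \<Rightarrow> real"
  assumes "C01 \<omega>" and "norm1inf \<omega> \<le> B"
    and "C1_immersion per c" and "C1_immersion per e"
    and "0 < m" and "\<And>t. t \<in> {0..1} \<Longrightarrow> m \<le> norm (cder per c t)"
    and "\<And>t. t \<in> {0..1} \<Longrightarrow> norm (cder per c t) \<le> W"
    and "dist1inf per e c \<le> \<delta>" and "4 * \<delta> \<le> m"
  shows "\<bar>mu_curve per e \<omega> - mu_curve per c \<omega>\<bar> \<le> 2 * B * (\<delta> + 2 * \<delta> / m) * (W + \<delta>) + B * \<delta>"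
proof -
  let ?g = "\<lambda>t. \<omega> (e t, cder per e t /\<^sub>R norm (cder per e t)) * norm (cder per e t)"
  let ?h = "\<lambda>t. \<omega> (c t, cder per c t /\<^sub>R norm (cder per c t)) * norm (cder per c t)"
  have cont: "continuous_on {0..1} ?g" "continuous_on {0..1} ?h"
    using continuous_on_mu_curve_integrand[OF assms(1)] assms(3,4) by blast+
  have "mu_curve per e \<omega> - mu_curve per c \<omega> = integral {0..1} (\<lambda>t. ?g t - ?h t)"
    unfolding mu_curve_def
    by (rule integral_diff[symmetric]) (use cont integrable_continuous_real in blast)+
  moreover have "norm (integral {0..1} (\<lambda>t. ?g t - ?h t))
      \<le> (2 * B * (\<delta> + 2 * \<delta> / m) * (W + \<delta>) + B * \<delta>) * (1 - 0)"
  proof (rule integral_bound)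
    show "continuous_on {0..1} (\<lambda>t. ?g t - ?h t)"
      using cont by (rule continuous_on_diff)
    show "norm (?g t - ?h t) \<le> 2 * B * (\<delta> + 2 * \<delta> / m) * (W + \<delta>) + B * \<delta>"
      if "t \<in> {0..1}" for t
      unfolding real_norm_def
    proof (rule C01_integrand_diff_le[OF assms(1,2,5)])
      show "norm (e t - c t) \<le> \<delta>" and "norm (cder per e t - cder per c t) \<le> \<delta>"
        using dist1inf_ge[OF assms(4,3) that] assms(8) by linarith+
    qed (use assms(6,7,9) that in auto)
  qed simp
  ultimately show ?thesis
    by simp
qed

lemma mu_curve_zero [simp]: "mu_curve per c (\<lambda>_. 0) = 0"
  unfolding mu_curve_def by simp

lemma Vnorm_le:
  fixes kx :: "'b \<Rightarrow> 'h::real_inner"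
  assumes "\<And>f. norm f \<le> 1 \<Longrightarrow> \<mu> (rk_eval kx f) \<le> b"
  shows "Vnorm kx \<mu> \<le> b"
proof -
  have "{f::'h. norm f \<le> 1} \<noteq> {}"
    by (metis empty_iff mem_Collect_eq norm_zero zero_le_one)
  then show ?thesis
    unfolding Vnorm_def by (rule cSUP_least) (use assms in simp)
qed

lemma Vnorm_nonneg:
  assumes "\<mu> (\<lambda>_. 0) = 0" and "\<And>f. norm f \<le> 1 \<Longrightarrow> \<mu> (rk_eval kx f) \<le> b"
  shows "0 \<le> Vnorm kx \<mu>"
proof -
  have "bdd_above ((\<lambda>f. \<mu> (rk_eval kx f)) ` {f. norm f \<le> 1})"
    using assms(2) by (intro bdd_aboveI2) auto
  then have "\<mu> (rk_eval kx 0) \<le> Vnorm kx \<mu>"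
    unfolding Vnorm_def by (intro cSUP_upper) auto
  moreover have "rk_eval kx 0 = (\<lambda>_. 0)"
    unfolding rk_eval_def by simp
  ultimately show ?thesis
    using assms(1) by simp
qed

lemma cont_embedded_C01_unit_ball:
  assumes "cont_embedded_C01 kx"
  obtains B where "\<And>f. C01 (rk_eval kx f)" and "\<And>f. norm f \<le> 1 \<Longrightarrow> norm1inf (rk_eval kx f) \<le> B"
proof -
  obtain C where C01: "\<And>f. C01 (rk_eval kx f)" and C: "\<And>f. norm1inf (rk_eval kx f) \<le> C * norm f"
    using assms unfolding cont_embedded_C01_def by blast
  have "norm1inf (rk_eval kx f) \<le> max C 0" if "norm f \<le> 1" for f
  proof -
    have "norm1inf (rk_eval kx f) \<le> max C 0 * norm f"
      using C[of f] mult_right_mono[of C "max C 0" "norm f"] by simp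
    also have "\<dots> \<le> max C 0"
      using that by (intro mult_left_le) auto
    finally show ?thesis .
  qed
  with C01 show ?thesis
    by (rule that)
qed

lemma Vnorm_mu_curve_diff_le:
  assumes C01: "\<And>f. C01 (rk_eval kx f)"
    and B: "\<And>f. norm f \<le> 1 \<Longrightarrow> norm1inf (rk_eval kx f) \<le> B"
    and "C1_immersion per c" and "C1_immersion per e"
    and "0 < m" and "\<And>t. t \<in> {0..1} \<Longrightarrow> m \<le> norm (cder per c t)"
    and "\<And>t. t \<in> {0..1} \<Longrightarrow> norm (cder per c t) \<le> W"
    and "dist1inf per e c \<le> \<delta>" and "4 * \<delta> \<le> m"
  shows "0 \<le> Vnorm kx (\<lambda>\<omega>. mu_curve per e \<omega> - mu_curve per c \<omega>)"
    and "Vnorm kx (\<lambda>\<omega>. mu_curve per e \<omega> - mu_curve per c \<omega>)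
      \<le> 2 * B * (\<delta> + 2 * \<delta> / m) * (W + \<delta>) + B * \<delta>"
proof -
  have "mu_curve per e (rk_eval kx f) - mu_curve per c (rk_eval kx f)
      \<le> 2 * B * (\<delta> + 2 * \<delta> / m) * (W + \<delta>) + B * \<delta>" if "norm f \<le> 1" for f
    using mu_curve_diff_le[OF C01 B[OF that] assms(3-9)] by (simp add: abs_le_iff)
  note bound = Vnorm_nonneg[where \<mu> = "\<lambda>\<omega>. mu_curve per e \<omega> - mu_curve per c \<omega>", OF _ this]
    Vnorm_le[where \<mu> = "\<lambda>\<omega>. mu_curve per e \<omega> - mu_curve per c \<omega>", OF this]
  then show "0 \<le> Vnorm kx (\<lambda>\<omega>. mu_curve per e \<omega> - mu_curve per c \<omega>)"
    and "Vnorm kx (\<lambda>\<omega>. mu_curve per e \<omega> - mu_curve per c \<omega>)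
      \<le> 2 * B * (\<delta> + 2 * \<delta> / m) * (W + \<delta>) + B * \<delta>"
    by simp_all
qed

theorem lemma3p3:
  fixes K :: "'a::euclidean_space \<times> 'a \<Rightarrow> 'a \<times> 'a \<Rightarrow> real"
    and kx :: "'a \<times> 'a \<Rightarrow> 'h::{real_inner, complete_space}"
    and per :: bool
    and c :: "nat \<Rightarrow> real \<Rightarrow> 'a"
    and c_inf :: "real \<Rightarrow> 'a"
  assumes "pos_def_kernel K Xset"
    and "is_rkhs K Xset kx"
    and "cont_embedded_C01 kx"
    and "\<And>p. C1_immersion per (c p)"
    and "C1_immersion per c_inf"
    and "(\<lambda>p. dist1inf per (c p) c_inf) \<longlonglongrightarrow> 0"
  shows "(\<lambda>p. Vnorm kx (\<lambda>\<omega>. mu_curve per (c p) \<omega> - mu_curve per c_inf \<omega>)) \<longlonglongrightarrow> 0"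
proof -
  obtain B where C01: "\<And>f. C01 (rk_eval kx f)"
    and B: "\<And>f. norm f \<le> 1 \<Longrightarrow> norm1inf (rk_eval kx f) \<le> B"
    using cont_embedded_C01_unit_ball[OF assms(3)] by blast
  obtain m W where "0 < m" and m: "\<And>t. t \<in> {0..1} \<Longrightarrow> m \<le> norm (cder per c_inf t)"
    and W: "\<And>t. t \<in> {0..1} \<Longrightarrow> norm (cder per c_inf t) \<le> W"
    using C1_immersion_speed_bounds[OF assms(5)] by blast
  define \<delta> where "\<delta> p = dist1inf per (c p) c_inf" for p
  define \<beta> where "\<beta> d = 2 * B * (d + 2 * d / m) * (W + d) + B * d" for d
  define V where "V = (\<lambda>p. Vnorm kx (\<lambda>\<omega>. mu_curve per (c p) \<omega> - mu_curve per c_inf \<omega>))"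
  have "eventually (\<lambda>p. 4 * \<delta> p \<le> m) sequentially"
    using order_tendstoD(2)[OF assms(6), of "m / 4"] \<open>0 < m\<close> unfolding \<delta>_def
    by (auto elim: eventually_mono)
  then have lower: "eventually (\<lambda>p. 0 \<le> V p) sequentially"
    and upper: "eventually (\<lambda>p. V p \<le> \<beta> (\<delta> p)) sequentially"
    using Vnorm_mu_curve_diff_le[OF C01 B assms(5,4) \<open>0 < m\<close> m W order_refl]
    unfolding V_def \<beta>_def \<delta>_def by (auto elim: eventually_mono)
  have "(\<lambda>p. \<beta> (\<delta> p)) \<longlonglongrightarrow> \<beta> 0"
    unfolding \<beta>_def \<delta>_def using \<open>0 < m\<close> by (intro tendsto_intros assms(6)) auto
  moreover have "\<beta> 0 = 0"
    by (simp add: \<beta>_def)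
  ultimately have "V \<longlonglongrightarrow> 0"
    using tendsto_sandwich[OF lower upper tendsto_const] by simp
  then show ?thesis
    unfolding V_def .
qed

end
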